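(* Let $\sigma$ be an automorphism of $D$, let $B$ be a subring of $D$ such that $D$ is a free right $B$-module of finite rank, and let $f\in D[t;\sigma,\delta]$ be monic of degree $m\ge2$ and $B$-weak semi-invariant. Then $S_f$ is a division algebra if and only if $f$ is irreducible. In particular, if $\sigma$ is an automorphism of $D$ and $f$ is right semi-invariant, then $S_f$ is a division algebra if and only if $f$ is irreducible.
   Context: $D$ is an associative division ring, $\sigma$ a ring endomorphism of $D$, $\delta$ a left $\sigma$-derivation. $D[t;\sigma,\delta]$ is the skew polynomial ring with $ta=\sigma(a)t+\delta(a)$. For monic $f$ of degree $m$, $S_f$ is the set of polynomials of degree $<m$ with multiplication $g\circ h=$ remainder of $gh$ upon right division by $f$. $f$ is $B$-weak semi-invariant if $fB\subseteq Df$, and right semi-invariant if $fD\subseteq Df$. $f$ is irreducible if it is not a unit and has no factorization $f=gh$ with $\deg g,\deg h<\deg f$. $S_f$ is a division algebra if left and right multiplication by every nonzero element are bijective. *)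

theory Defs
  imports "HOL-Computational_Algebra.Polynomial"
begin

(* Elements are represented by their coefficient sequences as 'a poly
   (p = sum_i coeff p i * t^i, coefficients on the LEFT); only the additive
   structure, coeff, degree and lead_coeff of the library type are used.
   The (noncommutative) multiplication is defined below via t a = sigma(a) t + delta(a). *)

definition ring_endo :: "('a::division_ring \<Rightarrow> 'a) \<Rightarrow> bool" where
  "ring_endo \<sigma> \<longleftrightarrow> (\<forall>a b. \<sigma> (a + b) = \<sigma> a + \<sigma> b) \<and> (\<forall>a b. \<sigma> (a * b) = \<sigma> a * \<sigma> b) \<and> \<sigma> 1 = 1"

definition ring_auto :: "('a::division_ring \<Rightarrow> 'a) \<Rightarrow> bool" where
  "ring_auto \<sigma> \<longleftrightarrow> ring_endo \<sigma> \<and> bij \<sigma>"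

definition left_sigma_derivation :: "('a::division_ring \<Rightarrow> 'a) \<Rightarrow> ('a \<Rightarrow> 'a) \<Rightarrow> bool" where
  "left_sigma_derivation \<sigma> \<delta> \<longleftrightarrow> (\<forall>a b. \<delta> (a + b) = \<delta> a + \<delta> b) \<and>
      (\<forall>a b. \<delta> (a * b) = \<sigma> a * \<delta> b + \<delta> a * b)"

definition skew_tmul :: "('a::division_ring \<Rightarrow> 'a) \<Rightarrow> ('a \<Rightarrow> 'a) \<Rightarrow> 'a poly \<Rightarrow> 'a poly" where
  "skew_tmul \<sigma> \<delta> p = pCons 0 (map_poly \<sigma> p) + map_poly \<delta> p"

definition skew_lscal :: "'a::division_ring \<Rightarrow> 'a poly \<Rightarrow> 'a poly" where
  "skew_lscal c p = map_poly (\<lambda>x. c * x) p"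

text \<open>right multiplication by t^j\<close>
definition skew_shift :: "nat \<Rightarrow> 'a::division_ring poly \<Rightarrow> 'a poly" where
  "skew_shift j p = (pCons 0 ^^ j) p"

text \<open>product in D[t;sigma,delta]: (sum_i p_i t^i)(sum_j q_j t^j) = sum_{i,j} p_i (t^i q_j) t^j\<close>
definition skew_mult :: "('a::division_ring \<Rightarrow> 'a) \<Rightarrow> ('a \<Rightarrow> 'a) \<Rightarrow> 'a poly \<Rightarrow> 'a poly \<Rightarrow> 'a poly" where
  "skew_mult \<sigma> \<delta> p q =
     (\<Sum>i\<le>degree p. \<Sum>j\<le>degree q.
        skew_shift j (skew_lscal (coeff p i) ((skew_tmul \<sigma> \<delta> ^^ i) [:coeff q j:])))"

definition skew_unit :: "('a::division_ring \<Rightarrow> 'a) \<Rightarrow> ('a \<Rightarrow> 'a) \<Rightarrow> 'a poly \<Rightarrow> bool" where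
  "skew_unit \<sigma> \<delta> f \<longleftrightarrow> (\<exists>g. skew_mult \<sigma> \<delta> g f = [:1:] \<and> skew_mult \<sigma> \<delta> f g = [:1:])"

definition skew_irreducible :: "('a::division_ring \<Rightarrow> 'a) \<Rightarrow> ('a \<Rightarrow> 'a) \<Rightarrow> 'a poly \<Rightarrow> bool" where
  "skew_irreducible \<sigma> \<delta> f \<longleftrightarrow> \<not> skew_unit \<sigma> \<delta> f \<and>
     \<not> (\<exists>g h. f = skew_mult \<sigma> \<delta> g h \<and> degree g < degree f \<and> degree h < degree f)"

definition skew_rmod :: "('a::division_ring \<Rightarrow> 'a) \<Rightarrow> ('a \<Rightarrow> 'a) \<Rightarrow> 'a poly \<Rightarrow> 'a poly \<Rightarrow> 'a poly" where
  "skew_rmod \<sigma> \<delta> p f = (THE r. degree r < degree f \<and> (\<exists>q. p = skew_mult \<sigma> \<delta> q f + r))"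

definition Sf_carrier :: "'a::division_ring poly \<Rightarrow> 'a poly set" where
  "Sf_carrier f = {g. degree g < degree f}"

definition Sf_mult :: "('a::division_ring \<Rightarrow> 'a) \<Rightarrow> ('a \<Rightarrow> 'a) \<Rightarrow> 'a poly \<Rightarrow> 'a poly \<Rightarrow> 'a poly \<Rightarrow> 'a poly" where
  "Sf_mult \<sigma> \<delta> f g h = skew_rmod \<sigma> \<delta> (skew_mult \<sigma> \<delta> g h) f"

definition Sf_division_algebra :: "('a::division_ring \<Rightarrow> 'a) \<Rightarrow> ('a \<Rightarrow> 'a) \<Rightarrow> 'a poly \<Rightarrow> bool" where
  "Sf_division_algebra \<sigma> \<delta> f \<longleftrightarrow>
     (\<forall>g \<in> Sf_carrier f. g \<noteq> 0 \<longrightarrow>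
        bij_betw (\<lambda>h. Sf_mult \<sigma> \<delta> f g h) (Sf_carrier f) (Sf_carrier f) \<and>
        bij_betw (\<lambda>h. Sf_mult \<sigma> \<delta> f h g) (Sf_carrier f) (Sf_carrier f))"

definition monic_skew :: "'a::division_ring poly \<Rightarrow> bool" where
  "monic_skew f \<longleftrightarrow> lead_coeff f = 1"

definition subring :: "'a::division_ring set \<Rightarrow> bool" where
  "subring B \<longleftrightarrow> 1 \<in> B \<and> (\<forall>a\<in>B. \<forall>b\<in>B. a + b \<in> B \<and> a - b \<in> B \<and> a * b \<in> B)"

definition free_right_module_fin_rank :: "'a::division_ring set \<Rightarrow> bool" where
  "free_right_module_fin_rank B \<longleftrightarrow>
     (\<exists>(n::nat) (b::nat \<Rightarrow> 'a). \<forall>d::'a. \<exists>!c::nat \<Rightarrow> 'a.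
        (\<forall>i<n. c i \<in> B) \<and> (\<forall>i\<ge>n. c i = 0) \<and> d = (\<Sum>i<n. b i * c i))"

definition weak_semi_invariant :: "('a::division_ring \<Rightarrow> 'a) \<Rightarrow> ('a \<Rightarrow> 'a) \<Rightarrow> 'a set \<Rightarrow> 'a poly \<Rightarrow> bool" where
  "weak_semi_invariant \<sigma> \<delta> B f \<longleftrightarrow>
     (\<forall>b\<in>B. \<exists>d. skew_mult \<sigma> \<delta> f [:b:] = skew_mult \<sigma> \<delta> [:d:] f)"

definition right_semi_invariant :: "('a::division_ring \<Rightarrow> 'a) \<Rightarrow> ('a \<Rightarrow> 'a) \<Rightarrow> 'a poly \<Rightarrow> bool" where
  "right_semi_invariant \<sigma> \<delta> f \<longleftrightarrow> weak_semi_invariant \<sigma> \<delta> UNIV f"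

end

theory Submission
  imports Defs
begin

(* If f = g h with deg g, deg h < deg f, then g \<odot> h = 0 in S_f, so left multiplication by g is
   not injective.

   Conversely, let f be irreducible. If g \<odot> h = 0 for nonzero g, h of degree < deg f, the left
   ideal {x. x h \<in> D[t] f} contains g and is generated by a monic k with deg k \<le> deg g. By
   irreducibility D[t] f + D[t] h = D[t], so x \<mapsto> x h mod f maps the polynomials of degree < deg k
   onto S_f, a left D-space of dimension deg f; hence deg f \<le> deg k, a contradiction. Thus S_f has
   no zero divisors, and every right multiplication, an injective D-linear endomorphism of the
   finite-dimensional space S_f, is bijective.
   Left multiplications are linear only over the eigenring E = {e. f e \<in> D[t] f}, which acts on
   S_f from the right and is a division ring by what was just shown. Weak semi-invariance puts B
   into E; as \<sigma> is onto and D = \<beta>_1 B + ... + \<beta>_n B, the monomials \<sigma>^i(\<beta>_j) t^i span S_f over E,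
   so left multiplications are bijective as well. A right semi-invariant f is D-weak semi-invariant, and D is
   free of rank one over itself. *)

section \<open>Vector spaces over a division ring\<close>

(* The scalars form a division ring K inside 's with the addition of 's but their own
   multiplication, so that the eigenring, acting on S_f from the right, can serve as scalars
   through its opposite multiplication. *)
locale left_vector_space =
  fixes K :: "'s::ab_group_add set" and mult :: "'s \<Rightarrow> 's \<Rightarrow> 's" and one :: 's
    and V :: "'v::ab_group_add set" and scale :: "'s \<Rightarrow> 'v \<Rightarrow> 'v"
  assumes zero_in_K: "0 \<in> K" and one_in_K: "one \<in> K" and one_neq_zero: "one \<noteq> 0"
    and add_in_K: "a \<in> K \<Longrightarrow> b \<in> K \<Longrightarrow> a + b \<in> K"
    and uminus_in_K: "a \<in> K \<Longrightarrow> - a \<in> K"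
    and mult_in_K: "a \<in> K \<Longrightarrow> b \<in> K \<Longrightarrow> mult a b \<in> K"
    and left_inverse_in_K: "a \<in> K \<Longrightarrow> a \<noteq> 0 \<Longrightarrow> \<exists>b\<in>K. mult b a = one"
    and zero_in_V: "0 \<in> V" and add_in_V: "v \<in> V \<Longrightarrow> w \<in> V \<Longrightarrow> v + w \<in> V"
    and uminus_in_V: "v \<in> V \<Longrightarrow> - v \<in> V"
    and scale_in_V: "a \<in> K \<Longrightarrow> v \<in> V \<Longrightarrow> scale a v \<in> V"
    and scale_left_distrib: "a \<in> K \<Longrightarrow> b \<in> K \<Longrightarrow> v \<in> V \<Longrightarrow> scale (a + b) v = scale a v + scale b v"
    and scale_right_distrib: "a \<in> K \<Longrightarrow> v \<in> V \<Longrightarrow> w \<in> V \<Longrightarrow> scale a (v + w) = scale a v + scale a w"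
    and scale_scale: "a \<in> K \<Longrightarrow> b \<in> K \<Longrightarrow> v \<in> V \<Longrightarrow> scale a (scale b v) = scale (mult a b) v"
    and scale_one: "v \<in> V \<Longrightarrow> scale one v = v"
begin

lemma sum_in_V: "(\<And>x. x \<in> A \<Longrightarrow> f x \<in> V) \<Longrightarrow> sum f A \<in> V"
  by (induction A rule: infinite_finite_induct) (auto intro: zero_in_V add_in_V)

lemma sum_in_K: "(\<And>x. x \<in> A \<Longrightarrow> f x \<in> K) \<Longrightarrow> sum f A \<in> K"
  by (induction A rule: infinite_finite_induct) (auto intro: zero_in_K add_in_K)

lemma scale_zero_left [simp]: "v \<in> V \<Longrightarrow> scale 0 v = 0"
  using scale_left_distrib[OF zero_in_K zero_in_K, of v] by simp

lemma scale_zero_right [simp]: "a \<in> K \<Longrightarrow> scale a 0 = 0"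
  using scale_right_distrib[OF _ zero_in_V zero_in_V, of a] by simp

lemma scale_minus_left: "a \<in> K \<Longrightarrow> v \<in> V \<Longrightarrow> scale (- a) v = - scale a v"
  using scale_left_distrib[of a "- a" v] uminus_in_K[of a]
    by (simp add: eq_neg_iff_add_eq_0 add.commute)

lemma scale_minus_right: "a \<in> K \<Longrightarrow> v \<in> V \<Longrightarrow> scale a (- v) = - scale a v"
  using scale_right_distrib[of a v "- v"] uminus_in_V[of v]
    by (simp add: eq_neg_iff_add_eq_0 add.commute)

lemma scale_diff_right: "a \<in> K \<Longrightarrow> v \<in> V \<Longrightarrow> w \<in> V \<Longrightarrow> scale a (v - w) = scale a v - scale a w"
  using scale_right_distrib[of a v "- w"] uminus_in_V[of w] scale_minus_right[of a w] by simp

lemma scale_sum_right: "a \<in> K \<Longrightarrow> (\<And>x. x \<in> A \<Longrightarrow> f x \<in> V) \<Longrightarrow> scale a (sum f A) = (\<Sum>x\<in>A. scale a (f x))"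
  by (induction A rule: infinite_finite_induct) (auto simp: scale_right_distrib sum_in_V)

lemma scale_sum_left: "v \<in> V \<Longrightarrow> (\<And>x. x \<in> A \<Longrightarrow> f x \<in> K) \<Longrightarrow> scale (sum f A) v = (\<Sum>x\<in>A. scale (f x) v)"
  by (induction A rule: infinite_finite_induct) (auto simp: scale_left_distrib sum_in_K)

definition span :: "('i \<Rightarrow> 'v) \<Rightarrow> 'i set \<Rightarrow> 'v set" where
  "span g I = {v. \<exists>c. (\<forall>i\<in>I. c i \<in> K) \<and> v = (\<Sum>i\<in>I. scale (c i) (g i))}"

definition independent :: "('i \<Rightarrow> 'v) \<Rightarrow> 'i set \<Rightarrow> bool" where
  "independent w J \<longleftrightarrow>
     (\<forall>c. (\<forall>j\<in>J. c j \<in> K) \<and> (\<Sum>j\<in>J. scale (c j) (w j)) = 0 \<longrightarrow> (\<forall>j\<in>J. c j = 0))"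

lemma independentD:
  "independent w J \<Longrightarrow> (\<And>j. j \<in> J \<Longrightarrow> c j \<in> K) \<Longrightarrow> (\<Sum>j\<in>J. scale (c j) (w j)) = 0 \<Longrightarrow> j \<in> J \<Longrightarrow> c j = 0"
  unfolding independent_def by blast

lemma independentI:
  "(\<And>c j. (\<And>j. j \<in> J \<Longrightarrow> c j \<in> K) \<Longrightarrow> (\<Sum>j\<in>J. scale (c j) (w j)) = 0 \<Longrightarrow> j \<in> J \<Longrightarrow> c j = 0)
    \<Longrightarrow> independent w J"
  unfolding independent_def by blast

context
  fixes g :: "'i \<Rightarrow> 'v" and I :: "'i set"
  assumes g_in_V: "\<And>i. i \<in> I \<Longrightarrow> g i \<in> V"
begin

lemma span_subset_V: "v \<in> span g I \<Longrightarrow> v \<in> V"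
  unfolding span_def using g_in_V by (auto intro!: sum_in_V scale_in_V)

lemma span_zero: "0 \<in> span g I"
  unfolding span_def using zero_in_K g_in_V by (auto intro!: exI[of _ "\<lambda>_. 0"])

lemma span_add: "v \<in> span g I \<Longrightarrow> w \<in> span g I \<Longrightarrow> v + w \<in> span g I"
proof -
  assume "v \<in> span g I" "w \<in> span g I"
  then obtain c c' where c: "\<forall>i\<in>I. c i \<in> K" "v = (\<Sum>i\<in>I. scale (c i) (g i))"
    and c': "\<forall>i\<in>I. c' i \<in> K" "w = (\<Sum>i\<in>I. scale (c' i) (g i))" unfolding span_def by blast
  have "v + w = (\<Sum>i\<in>I. scale (c i + c' i) (g i))"
    unfolding c c' sum.distrib[symmetric] using c c' g_in_V
      by (intro sum.cong) (simp_all add: scale_left_distrib)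
  then show ?thesis unfolding span_def using c c'
    by (auto intro!: exI[of _ "\<lambda>i. c i + c' i"] add_in_K)
qed

lemma span_scale: "a \<in> K \<Longrightarrow> v \<in> span g I \<Longrightarrow> scale a v \<in> span g I"
proof -
  assume a: "a \<in> K" and "v \<in> span g I"
  then obtain c where c: "\<forall>i\<in>I. c i \<in> K" "v = (\<Sum>i\<in>I. scale (c i) (g i))" unfolding span_def by blast
  have "scale a v = (\<Sum>i\<in>I. scale (mult a (c i)) (g i))"
    unfolding c using a c g_in_V
      by (subst scale_sum_right) (auto intro!: sum.cong scale_in_V simp: scale_scale)
  then show ?thesis unfolding span_def using c a
    by (auto intro!: exI[of _ "\<lambda>i. mult a (c i)"] mult_in_K)
qed

lemma span_diff: "v \<in> span g I \<Longrightarrow> w \<in> span g I \<Longrightarrow> v - w \<in> span g I"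
proof -
  assume "v \<in> span g I" "w \<in> span g I"
  moreover have "scale (- one) w = - w"
    using \<open>w \<in> span g I\<close> span_subset_V one_in_K by (simp add: scale_minus_left scale_one)
  ultimately show ?thesis
    using span_add[of v "- w"] span_scale[OF uminus_in_K[OF one_in_K], of w] by simp
qed

lemma span_sum: "(\<And>x. x \<in> A \<Longrightarrow> h x \<in> span g I) \<Longrightarrow> sum h A \<in> span g I"
  by (induction A rule: infinite_finite_induct) (auto intro: span_zero span_add)

lemma span_base:
  assumes "finite I" "i \<in> I"
  shows "g i \<in> span g I"
proof -
  let ?c = "\<lambda>x. if x = i then one else 0"
  have "(\<Sum>x\<in>I. scale (?c x) (g x)) = (\<Sum>x\<in>I. if x = i then g i else 0)"
    using g_in_V scale_one by (intro sum.cong) auto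
  also have "\<dots> = g i" using assms by simp
  finally show ?thesis
    unfolding span_def using zero_in_K one_in_K by (intro CollectI exI[of _ ?c]) auto
qed

end

lemma span_insert_elim:
  assumes "finite I" "i0 \<notin> I" "v \<in> span g (insert i0 I)"
  shows "\<exists>a\<in>K. v - scale a (g i0) \<in> span g I"
proof -
  obtain c where c: "\<forall>i\<in>insert i0 I. c i \<in> K" "v = (\<Sum>i\<in>insert i0 I. scale (c i) (g i))"
    using assms(3) unfolding span_def by blast
  have "v - scale (c i0) (g i0) = (\<Sum>i\<in>I. scale (c i) (g i))" using c(2) assms(1,2) by simp
  then show ?thesis using c(1) unfolding span_def by auto
qed

lemma independent_eliminate:
  assumes "finite J" "\<And>j. j \<in> J \<Longrightarrow> w j \<in> V" "independent w J" "j0 \<in> J"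
    and c_in_K: "\<And>j. j \<in> J \<Longrightarrow> c j \<in> K"
  shows "independent (\<lambda>j. w j - scale (c j) (w j0)) (J - {j0})"
proof (rule independentI)
  fix d j
  assume d_in_K: "\<And>j. j \<in> J - {j0} \<Longrightarrow> d j \<in> K"
    and zero: "(\<Sum>j\<in>J - {j0}. scale (d j) (w j - scale (c j) (w j0))) = 0" and j: "j \<in> J - {j0}"
  define e where "e = (\<Sum>j\<in>J - {j0}. mult (d j) (c j))"
  have e_in_K: "e \<in> K" unfolding e_def using d_in_K c_in_K by (intro sum_in_K mult_in_K) auto
  have "(\<Sum>j\<in>J - {j0}. scale (d j) (w j - scale (c j) (w j0)))
      = (\<Sum>j\<in>J - {j0}. scale (d j) (w j)) - (\<Sum>j\<in>J - {j0}. scale (mult (d j) (c j)) (w j0))"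
    unfolding sum_subtractf[symmetric] using assms d_in_K
    by (intro sum.cong) (auto simp: scale_diff_right scale_in_V scale_scale)
  also have "(\<Sum>j\<in>J - {j0}. scale (mult (d j) (c j)) (w j0)) = scale e (w j0)"
    unfolding e_def using assms d_in_K by (subst scale_sum_left) (auto intro!: mult_in_K)
  finally have s: "(\<Sum>j\<in>J - {j0}. scale (d j) (w j)) = scale e (w j0)" using zero by simp
  let ?d = "d(j0 := - e)"
  have "(\<Sum>i\<in>J - {j0}. scale (?d i) (w i)) = (\<Sum>i\<in>J - {j0}. scale (d i) (w i))"
    by (rule sum.cong) auto
  then have "(\<Sum>i\<in>J. scale (?d i) (w i)) = scale (- e) (w j0) + scale e (w j0)"
    using assms(1,4) s by (simp add: sum.remove)
  then have "(\<Sum>i\<in>J. scale (?d i) (w i)) = 0"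
    using e_in_K assms(2,4) by (simp add: scale_minus_left)
  moreover have "\<And>i. i \<in> J \<Longrightarrow> ?d i \<in> K" using d_in_K e_in_K uminus_in_K by simp
  ultimately have "?d j = 0" using independentD[OF assms(3)] j by blast
  then show "d j = 0" using j by simp
qed

lemma span_exchange:
  assumes g_in_V: "\<And>i. i \<in> I \<Longrightarrow> g i \<in> V" and "x \<in> V" "v \<in> V" "v0 \<in> V"
    and "a \<in> K" "a0 \<in> K" "b \<in> K" "mult b a0 = one"
    and u: "v - scale a x \<in> span g I" and u0: "v0 - scale a0 x \<in> span g I"
  shows "v - scale (mult a b) v0 \<in> span g I"
proof -
  have "scale b (scale a0 x) = x" using scale_scale[of b a0 x] assms(2,6-8) by (simp add: scale_one)
  then have "scale (mult a b) (scale a0 x) = scale a x"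
    using scale_scale[OF assms(5,7) scale_in_V[OF assms(6,2)]] by simp
  then have eq: "v - scale (mult a b) v0 = (v - scale a x) - scale (mult a b) (v0 - scale a0 x)"
    using assms(2-7) by (simp add: scale_diff_right scale_in_V mult_in_K algebra_simps)
  show ?thesis
    unfolding eq by (rule span_diff[OF g_in_V u span_scale[OF g_in_V mult_in_K[OF assms(5,7)] u0]])
qed

lemma independent_card_le:
  assumes "finite I" "finite J" "\<And>i. i \<in> I \<Longrightarrow> g i \<in> V" "\<And>j. j \<in> J \<Longrightarrow> w j \<in> span g I"
    and "independent w J"
  shows "card J \<le> card I"
  using assms
proof (induction I arbitrary: J w rule: finite_induct)
  case empty
  have "J = {}"
  proof (rule ccontr)
    assume "J \<noteq> {}"
    then obtain j where j: "j \<in> J" by blast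
    have "\<And>j. j \<in> J \<Longrightarrow> w j = 0" using empty.prems(3) unfolding span_def by simp
    then have "(\<lambda>_. one) j = 0"
      using independentD[OF empty.prems(4) _ _ j] one_in_K by (simp add: zero_in_V)
    then show False using one_neq_zero by simp
  qed
  then show ?case by simp
next
  case (insert i0 I)
  have w_in_V: "\<And>j. j \<in> J \<Longrightarrow> w j \<in> V" by (rule span_subset_V[OF insert.prems(2,3)])
  have g_in_V: "\<And>i. i \<in> I \<Longrightarrow> g i \<in> V" "g i0 \<in> V" using insert.prems(2) by auto
  obtain a where a_in_K: "\<And>j. j \<in> J \<Longrightarrow> a j \<in> K"
    and u: "\<And>j. j \<in> J \<Longrightarrow> w j - scale (a j) (g i0) \<in> span g I"
    using span_insert_elim[OF insert.hyps(1,2) insert.prems(3)] by metis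
  show ?case
  proof (cases "\<forall>j\<in>J. a j = 0")
    case True
    then have "\<And>j. j \<in> J \<Longrightarrow> w j \<in> span g I" using u g_in_V by simp
    with insert.IH[OF insert.prems(1) g_in_V(1) _ insert.prems(4)] insert.hyps show ?thesis by simp
  next
    case False
    then obtain j0 where j0: "j0 \<in> J" "a j0 \<noteq> 0" by blast
    obtain b where b: "b \<in> K" "mult b (a j0) = one"
      using left_inverse_in_K[OF a_in_K[OF j0(1)] j0(2)] by blast
    let ?c = "\<lambda>j. mult (a j) b"
    have reduced_in_span: "w j - scale (?c j) (w j0) \<in> span g I" if "j \<in> J - {j0}" for j
      by (rule span_exchange[OF g_in_V w_in_V w_in_V a_in_K a_in_K b u u]) (use that j0(1) in auto)
    have c_in_K: "\<And>j. j \<in> J \<Longrightarrow> ?c j \<in> K" using a_in_K b(1) mult_in_K by blast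
    from insert.IH[OF _ g_in_V(1) reduced_in_span
        independent_eliminate[OF insert.prems(1) w_in_V insert.prems(4) j0(1) c_in_K]] insert.prems(1)
    have "card (J - {j0}) \<le> card I" by simp
    then show ?thesis using insert.hyps j0 insert.prems(1) by (simp add: card_Diff_singleton)
  qed
qed

lemma independent_extend:
  assumes "finite J" "k \<notin> J" "\<And>j. j \<in> J \<Longrightarrow> w j \<in> V" "y \<in> V" "independent w J" "y \<notin> span w J"
  shows "independent (w(k := y)) (insert k J)"
proof (rule independentI)
  fix c j
  assume c_in_K: "\<And>j. j \<in> insert k J \<Longrightarrow> c j \<in> K"
    and "(\<Sum>j\<in>insert k J. scale (c j) ((w(k := y)) j)) = 0" and j: "j \<in> insert k J"
  moreover have "(\<Sum>j\<in>J. scale (c j) ((w(k := y)) j)) = (\<Sum>j\<in>J. scale (c j) (w j))"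
    using assms(2) by (intro sum.cong) auto
  ultimately have zero: "scale (c k) y + (\<Sum>j\<in>J. scale (c j) (w j)) = 0" using assms(1,2) by simp
  let ?s = "\<Sum>j\<in>J. scale (c j) (w j)"
  have s_in_span: "?s \<in> span w J" unfolding span_def using c_in_K by blast
  have ck: "c k = 0"
  proof (rule ccontr)
    assume "c k \<noteq> 0"
    then obtain b where b: "b \<in> K" "mult b (c k) = one" using left_inverse_in_K c_in_K by blast
    have s_in_V: "?s \<in> V" using c_in_K assms(3) by (auto intro!: sum_in_V scale_in_V)
    have "scale (c k) y = - ?s" using zero by (simp add: eq_neg_iff_add_eq_0)
    have "y = scale b (scale (c k) y)" using b c_in_K assms(4) by (simp add: scale_scale scale_one)
    also have "\<dots> = 0 - scale b ?s"
      using \<open>scale (c k) y = - ?s\<close> b(1) s_in_V by (simp add: scale_minus_right)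
    finally have "y = 0 - scale b ?s" .
    then have "y \<in> span w J"
      using span_diff[OF assms(3) span_zero[OF assms(3)] span_scale[OF assms(3) b(1) s_in_span]]
        by simp
    then show False using assms(6) by simp
  qed
  then have "?s = 0" using zero assms(4) by simp
  show "c j = 0"
  proof (cases "j = k")
    case False
    have "\<And>i. i \<in> J \<Longrightarrow> c i \<in> K" using c_in_K by blast
    from independentD[OF assms(5) this \<open>?s = 0\<close>] j False show ?thesis by simp
  next
    case True
    with ck show ?thesis by simp
  qed
qed

definition linear_endo :: "('v \<Rightarrow> 'v) \<Rightarrow> bool" where
  "linear_endo \<phi> \<longleftrightarrow> (\<forall>v\<in>V. \<phi> v \<in> V) \<and> (\<forall>v\<in>V. \<forall>w\<in>V. \<phi> (v + w) = \<phi> v + \<phi> w) \<and>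
     (\<forall>a\<in>K. \<forall>v\<in>V. \<phi> (scale a v) = scale a (\<phi> v))"

lemma linear_endo_zero: "linear_endo \<phi> \<Longrightarrow> \<phi> 0 = 0"
  using zero_in_V unfolding linear_endo_def by (metis add_0 add_cancel_left_right)

lemma linear_endo_sum:
  assumes "linear_endo \<phi>" "\<And>j. j \<in> J \<Longrightarrow> c j \<in> K" "\<And>j. j \<in> J \<Longrightarrow> w j \<in> V"
  shows "\<phi> (\<Sum>j\<in>J. scale (c j) (w j)) = (\<Sum>j\<in>J. scale (c j) (\<phi> (w j)))"
  using assms(2,3)
  by (induction J rule: infinite_finite_induct)
    (use assms(1) in \<open>auto simp: linear_endo_zero linear_endo_def scale_in_V sum_in_V\<close>)

lemma span_linear_endo_image:
  assumes "linear_endo \<phi>" "\<And>j. j \<in> J \<Longrightarrow> w j \<in> V"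
  shows "span (\<phi> \<circ> w) J \<subseteq> \<phi> ` V"
proof
  fix v assume "v \<in> span (\<phi> \<circ> w) J"
  then obtain c where c: "\<And>j. j \<in> J \<Longrightarrow> c j \<in> K" "v = (\<Sum>j\<in>J. scale (c j) (\<phi> (w j)))"
    unfolding span_def by auto
  then have "v = \<phi> (\<Sum>j\<in>J. scale (c j) (w j))" using linear_endo_sum[OF assms(1), of J c w] assms(2)
    by simp
  moreover have "(\<Sum>j\<in>J. scale (c j) (w j)) \<in> V" using c(1) assms(2)
    by (auto intro!: sum_in_V scale_in_V)
  ultimately show "v \<in> \<phi> ` V" by blast
qed

lemma independent_linear_endo_image:
  assumes "linear_endo \<phi>" "inj_on \<phi> V" "\<And>j. j \<in> J \<Longrightarrow> w j \<in> V" "independent w J"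
  shows "independent (\<phi> \<circ> w) J"
proof (rule independentI)
  fix c j
  assume c_in_K: "\<And>j. j \<in> J \<Longrightarrow> c j \<in> K" and zero: "(\<Sum>j\<in>J. scale (c j) ((\<phi> \<circ> w) j)) = 0"
    and j: "j \<in> J"
  have "\<phi> (\<Sum>j\<in>J. scale (c j) (w j)) = (\<Sum>j\<in>J. scale (c j) (\<phi> (w j)))"
    by (rule linear_endo_sum[OF assms(1), of J c w, OF c_in_K assms(3)])
  also have "\<dots> = \<phi> 0" using zero linear_endo_zero[OF assms(1)] by simp
  finally have "\<phi> (\<Sum>j\<in>J. scale (c j) (w j)) = \<phi> 0" .
  moreover have "(\<Sum>j\<in>J. scale (c j) (w j)) \<in> V"
    using c_in_K assms(3) by (auto intro!: sum_in_V scale_in_V)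
  ultimately have "(\<Sum>j\<in>J. scale (c j) (w j)) = 0" using inj_onD[OF assms(2)] zero_in_V by blast
  from independentD[OF assms(4) c_in_K this j] show "c j = 0" .
qed

(* An independent family of maximal length k exists by independent_card_le; its image is
   independent, and a vector outside the image of \<phi> would extend it to k + 1 vectors. *)
lemma linear_endo_inj_imp_surj:
  assumes "finite I" "\<And>i. i \<in> I \<Longrightarrow> g i \<in> V" "V \<subseteq> span g I" "linear_endo \<phi>" "inj_on \<phi> V"
  shows "\<phi> ` V = V"
proof -
  define P where "P k \<longleftrightarrow> (\<exists>w. (\<forall>j<k. w j \<in> V) \<and> independent w {..<k})" for k :: nat
  have bounded: "k \<le> card I" if Pk: "P k" for k
  proof -
    obtain w where "\<forall>j<k. w j \<in> V" "independent w {..<k}" using Pk unfolding P_def by blast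
    then have "card {..<k} \<le> card I"
      using assms(3) by (intro independent_card_le[OF assms(1) finite_lessThan assms(2)]) auto
    then show ?thesis by simp
  qed
  have "P 0" unfolding P_def independent_def by simp
  define k where "k = (GREATEST k. P k)"
  have "P k" unfolding k_def using GreatestI_nat[of P 0 "card I"] \<open>P 0\<close> bounded by blast
  then obtain w where w: "\<And>j. j < k \<Longrightarrow> w j \<in> V" "independent w {..<k}" unfolding P_def by blast
  have \<phi>w_in_V: "\<And>j. j \<in> {..<k} \<Longrightarrow> (\<phi> \<circ> w) j \<in> V" using assms(4) w(1) unfolding linear_endo_def
    by simp
  have \<phi>w_independent: "independent (\<phi> \<circ> w) {..<k}"
    by (rule independent_linear_endo_image[OF assms(4,5) _ w(2)]) (use w(1) in auto)
  have "y \<in> \<phi> ` V" if y: "y \<in> V" for y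
  proof (rule ccontr)
    assume "y \<notin> \<phi> ` V"
    then have "y \<notin> span (\<phi> \<circ> w) {..<k}"
      using span_linear_endo_image[OF assms(4), of "{..<k}" w] w(1) by auto
    from independent_extend[OF finite_lessThan _ \<phi>w_in_V y \<phi>w_independent this]
    have "independent ((\<phi> \<circ> w)(k := y)) {..<Suc k}" by (simp add: lessThan_Suc)
    moreover have "\<forall>j<Suc k. ((\<phi> \<circ> w)(k := y)) j \<in> V" using \<phi>w_in_V y by (simp add: less_Suc_eq)
    ultimately have "P (Suc k)" unfolding P_def by blast
    then have "Suc k \<le> k" using Greatest_le_nat[of P "Suc k" "card I", folded k_def] bounded
      by blast
    then show False by simp
  qed
  then show ?thesis using assms(4) unfolding linear_endo_def by blast
qed

end

section \<open>Skew polynomials\<close>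

lemma ring_endo_add: "ring_endo \<sigma> \<Longrightarrow> \<sigma> (a + b) = \<sigma> a + \<sigma> b"
  by (simp add: ring_endo_def)

lemma ring_endo_mult: "ring_endo \<sigma> \<Longrightarrow> \<sigma> (a * b) = \<sigma> a * \<sigma> b"
  by (simp add: ring_endo_def)

lemma ring_endo_1: "ring_endo \<sigma> \<Longrightarrow> \<sigma> 1 = 1"
  by (simp add: ring_endo_def)

lemma ring_endo_0: "ring_endo \<sigma> \<Longrightarrow> \<sigma> 0 = 0"
  using ring_endo_add[of \<sigma> 0 0] by simp

lemma ring_endo_sum: "ring_endo \<sigma> \<Longrightarrow> \<sigma> (sum g A) = (\<Sum>x\<in>A. \<sigma> (g x))"
  by (induction A rule: infinite_finite_induct) (simp_all add: ring_endo_0 ring_endo_add)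

lemma ring_endo_funpow: "ring_endo \<sigma> \<Longrightarrow> ring_endo (\<sigma> ^^ n)"
  by (induction n) (simp_all add: ring_endo_def)

lemma coeff_skew_lscal [simp]: "coeff (skew_lscal c p) n = c * coeff p n"
  by (simp add: skew_lscal_def coeff_map_poly)

lemma skew_lscal_add: "skew_lscal c (p + q) = skew_lscal c p + skew_lscal c q"
  by (rule poly_eqI) (simp add: distrib_left)

lemma skew_lscal_add_left: "skew_lscal (a + b) p = skew_lscal a p + skew_lscal b p"
  by (rule poly_eqI) (simp add: distrib_right)

lemma skew_lscal_0 [simp]: "skew_lscal c 0 = 0" "skew_lscal 0 p = 0"
  by (rule poly_eqI, simp)+

lemma skew_lscal_1 [simp]: "skew_lscal 1 p = p"
  by (rule poly_eqI) simp

lemma skew_lscal_skew_lscal: "skew_lscal a (skew_lscal b p) = skew_lscal (a * b) p"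
  by (rule poly_eqI) (simp add: mult.assoc)

lemma skew_lscal_pCons: "skew_lscal c (pCons a p) = pCons (c * a) (skew_lscal c p)"
  by (rule poly_eqI) (simp add: coeff_pCons split: nat.split)

lemma skew_lscal_sum: "skew_lscal c (sum g A) = (\<Sum>x\<in>A. skew_lscal c (g x))"
  by (rule poly_eqI) (simp add: coeff_sum sum_distrib_left)

lemma skew_lscal_monom: "skew_lscal c (monom a n) = monom (c * a) n"
  by (rule poly_eqI) simp

lemma degree_skew_lscal_le: "degree (skew_lscal c p) \<le> degree p"
  by (rule degree_le) (simp add: coeff_eq_0)

lemma degree_skew_lscal: "c \<noteq> 0 \<Longrightarrow> degree (skew_lscal c p) = degree p"
  by (rule antisym[OF degree_skew_lscal_le], cases "p = 0") (simp_all add: le_degree)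

locale skew_poly_ring =
  fixes \<sigma> \<delta> :: "'a::division_ring \<Rightarrow> 'a"
  assumes endo: "ring_endo \<sigma>" and derivation: "left_sigma_derivation \<sigma> \<delta>"
begin

abbreviation tmul :: "'a poly \<Rightarrow> 'a poly" where
  "tmul \<equiv> skew_tmul \<sigma> \<delta>"

abbreviation skew_times :: "'a poly \<Rightarrow> 'a poly \<Rightarrow> 'a poly" (infixl "\<star>" 70) where
  "p \<star> q \<equiv> skew_mult \<sigma> \<delta> p q"

lemma sigma_0 [simp]: "\<sigma> 0 = 0"
  by (rule ring_endo_0[OF endo])

lemma sigma_1 [simp]: "\<sigma> 1 = 1"
  by (rule ring_endo_1[OF endo])

lemma delta_add: "\<delta> (a + b) = \<delta> a + \<delta> b"
  using derivation by (simp add: left_sigma_derivation_def)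

lemma delta_mult: "\<delta> (a * b) = \<sigma> a * \<delta> b + \<delta> a * b"
  using derivation by (simp add: left_sigma_derivation_def)

lemma delta_0 [simp]: "\<delta> 0 = 0"
  using delta_add[of 0 0] by simp

lemma delta_1 [simp]: "\<delta> 1 = 0"
  using delta_mult[of 1 1] by simp

lemma coeff_tmul:
  "coeff (tmul p) n = (case n of 0 \<Rightarrow> \<delta> (coeff p 0) | Suc k \<Rightarrow> \<sigma> (coeff p k) + \<delta> (coeff p n))"
  by (cases n) (simp_all add: skew_tmul_def coeff_map_poly)

lemma tmul_add: "tmul (p + q) = tmul p + tmul q"
  by (rule poly_eqI) (simp add: coeff_tmul ring_endo_add[OF endo] delta_add split: nat.split)

lemma tmul_0 [simp]: "tmul 0 = 0"
  by (rule poly_eqI) (simp add: coeff_tmul split: nat.split)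

lemma tmul_pCons_0: "tmul (pCons 0 p) = pCons 0 (tmul p)"
  by (rule poly_eqI) (simp add: coeff_tmul coeff_pCons split: nat.split)

lemma tmul_pCons: "tmul (pCons a p) = pCons (\<delta> a) ([:\<sigma> a:] + tmul p)"
  by (rule poly_eqI) (simp add: coeff_tmul coeff_pCons split: nat.split)

lemma tmul_skew_lscal: "tmul (skew_lscal c p) = skew_lscal (\<sigma> c) (tmul p) + skew_lscal (\<delta> c) p"
  by (rule poly_eqI)
    (simp add: coeff_tmul ring_endo_mult[OF endo] delta_mult distrib_left add_ac split: nat.split)

lemma tmul_monic:
  assumes "lead_coeff p = 1"
  shows "degree (tmul p) = Suc (degree p)" "lead_coeff (tmul p) = 1"
proof -
  have top: "coeff (tmul p) (Suc (degree p)) = 1"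
    using assms by (simp add: coeff_tmul coeff_eq_0)
  have "degree (tmul p) \<le> Suc (degree p)"
    by (rule degree_le) (auto simp: coeff_tmul coeff_eq_0 split: nat.split)
  moreover have "Suc (degree p) \<le> degree (tmul p)" using top by (intro le_degree) simp
  ultimately show "degree (tmul p) = Suc (degree p)" by simp
  with top show "lead_coeff (tmul p) = 1" by simp
qed

lemma tmul_power_add: "(tmul ^^ i) (p + q) = (tmul ^^ i) p + (tmul ^^ i) q"
  by (induction i) (simp_all add: tmul_add)

lemma tmul_power_0 [simp]: "(tmul ^^ i) 0 = 0"
  by (induction i) simp_all

lemma tmul_power_sum: "(tmul ^^ i) (sum g A) = (\<Sum>x\<in>A. (tmul ^^ i) (g x))"
  by (induction A rule: infinite_finite_induct) (simp_all add: tmul_power_add)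

lemma tmul_power_pCons_0: "(tmul ^^ i) (pCons 0 p) = pCons 0 ((tmul ^^ i) p)"
  by (induction i) (simp_all add: tmul_pCons_0)

lemma tmul_power_const:
  "degree ((tmul ^^ i) [:c:]) \<le> i \<and> coeff ((tmul ^^ i) [:c:]) i = (\<sigma> ^^ i) c"
proof (induction i)
  case (Suc i)
  then show ?case
    by (auto simp: coeff_tmul coeff_eq_0 intro!: degree_le split: nat.split)
qed simp

lemma skew_mult_eq_sum: "p \<star> q = (\<Sum>i\<le>degree p. skew_lscal (coeff p i) ((tmul ^^ i) q))"
proof -
  have shift: "skew_shift j (skew_lscal a ((tmul ^^ i) [:b:])) = skew_lscal a ((tmul ^^ i) (monom b j))"
    for i j a b
    by (induction j)
      (simp_all add: skew_shift_def monom_Suc skew_lscal_pCons tmul_power_pCons_0 monom_0)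
  show ?thesis
    unfolding skew_mult_def shift
    by (simp add: skew_lscal_sum[symmetric] tmul_power_sum[symmetric] poly_as_sum_of_monoms)
qed

lemma skew_mult_0_left [simp]: "0 \<star> q = 0"
  by (simp add: skew_mult_eq_sum)

lemma skew_mult_pCons: "pCons a p \<star> q = skew_lscal a q + p \<star> tmul q"
proof -
  have "pCons a p \<star> q = (\<Sum>i\<le>Suc (degree p). skew_lscal (coeff (pCons a p) i) ((tmul ^^ i) q))"
    unfolding skew_mult_eq_sum
    by (rule sum.mono_neutral_left) (auto simp: coeff_eq_0 degree_pCons_le)
  also have "\<dots> = skew_lscal a q + (\<Sum>i\<le>degree p. skew_lscal (coeff p i) ((tmul ^^ i) (tmul q)))"
    by (subst sum.atMost_Suc_shift) (simp add: funpow_swap1)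
  finally show ?thesis by (simp add: skew_mult_eq_sum)
qed

lemma skew_mult_const_left: "[:c:] \<star> q = skew_lscal c q"
  using skew_mult_pCons[of c 0 q] by simp

lemma skew_mult_monom_left: "monom a i \<star> q = skew_lscal a ((tmul ^^ i) q)"
  by (induction i arbitrary: q)
    (simp_all add: monom_0 skew_mult_const_left monom_Suc skew_mult_pCons funpow_swap1)

lemma skew_mult_add_right: "p \<star> (q1 + q2) = p \<star> q1 + p \<star> q2"
  by (induction p arbitrary: q1 q2) (simp_all add: skew_mult_pCons skew_lscal_add tmul_add add_ac)

lemma skew_mult_0_right [simp]: "p \<star> 0 = 0"
  by (induction p) (simp_all add: skew_mult_pCons)

lemma skew_mult_add_left: "(p1 + p2) \<star> q = p1 \<star> q + p2 \<star> q"
proof (induction p1 arbitrary: p2 q)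
  case (pCons a p1)
  obtain b p2' where "p2 = pCons b p2'" by (cases p2) auto
  then show ?case by (simp add: skew_mult_pCons skew_lscal_add_left pCons.IH add_ac)
qed simp

lemma skew_mult_minus_left: "(- p) \<star> q = - (p \<star> q)"
  using skew_mult_add_left[of p "- p" q] by (simp add: eq_neg_iff_add_eq_0 add.commute)

lemma skew_mult_minus_right: "p \<star> (- q) = - (p \<star> q)"
  using skew_mult_add_right[of p q "- q"] by (simp add: eq_neg_iff_add_eq_0 add.commute)

lemma skew_mult_diff_left: "(p1 - p2) \<star> q = p1 \<star> q - p2 \<star> q"
  using skew_mult_add_left[of p1 "- p2" q] by (simp add: skew_mult_minus_left)

lemma skew_mult_diff_right: "p \<star> (q1 - q2) = p \<star> q1 - p \<star> q2"
  using skew_mult_add_right[of p q1 "- q2"] by (simp add: skew_mult_minus_right)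

lemma skew_mult_sum_left: "sum g A \<star> q = (\<Sum>x\<in>A. g x \<star> q)"
  by (induction A rule: infinite_finite_induct) (simp_all add: skew_mult_add_left)

lemma skew_mult_skew_lscal_left: "skew_lscal c p \<star> q = skew_lscal c (p \<star> q)"
  by (induction p arbitrary: q)
    (simp_all add: skew_mult_pCons skew_lscal_pCons skew_lscal_add skew_lscal_skew_lscal)

lemma tmul_skew_mult: "tmul (p \<star> q) = tmul p \<star> q"
proof (induction p arbitrary: q)
  case (pCons a p)
  then show ?case
    by (simp add: skew_mult_pCons tmul_pCons tmul_add tmul_skew_lscal skew_mult_add_left
        skew_mult_const_left add_ac)
qed simp

lemma skew_mult_assoc: "(p \<star> q) \<star> r = p \<star> (q \<star> r)"
  by (induction p arbitrary: q)
    (simp_all add: skew_mult_pCons skew_mult_add_left skew_mult_skew_lscal_left tmul_skew_mult)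

lemma skew_mult_1_left [simp]: "[:1:] \<star> p = p"
  by (simp add: skew_mult_const_left)

lemma skew_mult_pCons_0_right: "p \<star> pCons 0 q = pCons 0 (p \<star> q)"
  by (induction p arbitrary: q) (simp_all add: skew_mult_pCons skew_lscal_pCons tmul_pCons_0)

lemma skew_mult_1_right [simp]: "p \<star> [:1:] = p"
proof -
  have "tmul [:1:] = pCons 0 [:1:]"
    using tmul_pCons[of 1 0] by simp
  then show ?thesis
    by (induction p) (simp_all add: skew_mult_pCons skew_mult_pCons_0_right skew_lscal_pCons)
qed

lemma skew_mult_monic:
  assumes "lead_coeff f = 1" "q \<noteq> 0"
  shows "degree (q \<star> f) = degree q + degree f \<and> coeff (q \<star> f) (degree q + degree f) = lead_coeff q"
  using assms
proof (induction q arbitrary: f)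
  case (pCons a p)
  show ?case
  proof (cases "p = 0")
    case True
    with pCons.prems show ?thesis by (simp add: skew_mult_pCons degree_skew_lscal)
  next
    case False
    from pCons.IH[OF tmul_monic(2)[OF pCons.prems(1)] False] tmul_monic(1)[OF pCons.prems(1)]
    have IH: "degree (p \<star> tmul f) = Suc (degree p + degree f)"
      "coeff (p \<star> tmul f) (Suc (degree p + degree f)) = lead_coeff p"
      by simp_all
    have lower: "degree (skew_lscal a f) < degree (p \<star> tmul f)"
      using degree_skew_lscal_le[of a f] IH(1) by simp
    then have "coeff (skew_lscal a f) (degree (p \<star> tmul f)) = 0"
      by (simp add: coeff_eq_0 del: coeff_skew_lscal)
    with lower IH False show ?thesis by (simp add: skew_mult_pCons degree_add_eq_right)
  qed
qed simp

lemma skew_right_division: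
  assumes "lead_coeff f = 1" "0 < degree f"
  shows "\<exists>q r. p = q \<star> f + r \<and> degree r < degree f"
proof (induction "degree p" arbitrary: p rule: less_induct)
  case less
  show ?case
  proof (cases "degree p < degree f")
    case True
    then show ?thesis by (intro exI[of _ 0] exI[of _ p]) simp
  next
    case False
    define m where "m = monom (lead_coeff p) (degree p - degree f)"
    have "p \<noteq> 0" using False assms(2) by auto
    then have m: "degree (m \<star> f) = degree p" "coeff (m \<star> f) (degree p) = lead_coeff p"
      using skew_mult_monic[OF assms(1), of m] False by (simp_all add: m_def degree_monom_eq)
    show ?thesis
    proof (cases "p - m \<star> f = 0")
      case True
      then show ?thesis by (intro exI[of _ m] exI[of _ 0]) (simp add: assms)
    next
      case False
      have "degree (p - m \<star> f) \<le> degree p" using m by (simp add: degree_diff_le)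
      moreover have "coeff (p - m \<star> f) (degree p) = 0" using m by simp
      ultimately have "degree (p - m \<star> f) < degree p" using False
        by (metis le_neq_implies_less leading_coeff_0_iff)
      from less[OF this] obtain q r where "p - m \<star> f = q \<star> f + r" "degree r < degree f" by blast
      then have "p = (m + q) \<star> f + r \<and> degree r < degree f"
        by (simp add: skew_mult_add_left algebra_simps)
      then show ?thesis by blast
    qed
  qed
qed

lemma skew_right_division_unique:
  assumes "lead_coeff f = 1" "q \<star> f + r = q' \<star> f + r'" "degree r < degree f" "degree r' < degree f"
  shows "q = q'" "r = r'"
proof -
  have eq: "(q - q') \<star> f = r' - r" using assms(2) by (simp add: skew_mult_diff_left algebra_simps)
  have "degree (r' - r) < degree f" using assms(3,4) degree_diff_le_max[of r' r] by simp
  then show "q = q'" using skew_mult_monic[OF assms(1), of "q - q'"] eq by fastforce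
  then show "r = r'" using assms(2) by simp
qed

lemma skew_rmod_eqI:
  assumes "lead_coeff f = 1" "degree r < degree f" "p = q \<star> f + r"
  shows "skew_rmod \<sigma> \<delta> p f = r"
  unfolding skew_rmod_def
proof (rule the_equality)
  fix r' assume "degree r' < degree f \<and> (\<exists>q. p = q \<star> f + r')"
  then show "r' = r" using skew_right_division_unique(2)[OF assms(1)] assms(2,3) by metis
qed (use assms in blast)

definition left_ideal :: "'a poly set \<Rightarrow> bool" where
  "left_ideal J \<longleftrightarrow> (\<forall>x\<in>J. \<forall>y\<in>J. x - y \<in> J) \<and> (\<forall>w. \<forall>x\<in>J. w \<star> x \<in> J)"

lemma monic_degree_0: "lead_coeff d = 1 \<Longrightarrow> degree d = 0 \<Longrightarrow> d = [:1:]"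
  by (metis degree_0_id)

lemma left_ideal_principal:
  assumes "left_ideal J" "x0 \<in> J" "x0 \<noteq> 0"
  shows "\<exists>d\<in>J. lead_coeff d = 1 \<and> degree d \<le> degree x0 \<and> (\<forall>x\<in>J. \<exists>q. x = q \<star> d)"
proof -
  define n where "n = (LEAST n. \<exists>x\<in>J. x \<noteq> 0 \<and> degree x = n)"
  obtain x where x: "x \<in> J" "x \<noteq> 0" "degree x = n"
    using LeastI_ex[of "\<lambda>n. \<exists>x\<in>J. x \<noteq> 0 \<and> degree x = n"] assms(2,3) unfolding n_def by blast
  have minimal: "degree y \<ge> n" if "y \<in> J" "y \<noteq> 0" for y
    unfolding n_def using that by (intro Least_le) blast
  define d where "d = [:inverse (lead_coeff x):] \<star> x"
  have "d \<in> J" using assms(1) x(1) unfolding left_ideal_def d_def by blast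
  have "inverse (lead_coeff x) \<noteq> 0" using x(2) by simp
  then have "degree d = degree x" by (simp add: d_def skew_mult_const_left degree_skew_lscal)
  moreover have "lead_coeff x \<noteq> 0" using x(2) by simp
  ultimately have d: "degree d = n" "lead_coeff d = 1"
    using x(3) by (simp_all add: d_def skew_mult_const_left)
  have "\<exists>q. y = q \<star> d" if y: "y \<in> J" for y
  proof (cases "degree d = 0")
    case True
    then show ?thesis using monic_degree_0[OF d(2)] by (intro exI[of _ y]) simp
  next
    case False
    then obtain q r where qr: "y = q \<star> d + r" "degree r < degree d"
      using skew_right_division[OF d(2)] by blast
    have "r = y - q \<star> d" using qr(1) by simp
    then have "r \<in> J" using assms(1) y \<open>d \<in> J\<close> unfolding left_ideal_def by simp
    then have "r = 0" using minimal qr(2) d(1) by fastforce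
    with qr show ?thesis by auto
  qed
  moreover have "n \<le> degree x0" using minimal assms(2,3) by blast
  ultimately show ?thesis using \<open>d \<in> J\<close> d by blast
qed

lemma left_ideal_sum_multiples: "left_ideal {x. \<exists>u v. x = u \<star> f + v \<star> h}"
proof -
  let ?J = "{x. \<exists>u v. x = u \<star> f + v \<star> h}"
  have "x - y \<in> ?J" if xy: "x \<in> ?J" "y \<in> ?J" for x y
  proof -
    obtain u v u' v' where "x = u \<star> f + v \<star> h" "y = u' \<star> f + v' \<star> h" using xy by blast
    then have "x - y = (u - u') \<star> f + (v - v') \<star> h" by (simp add: skew_mult_diff_left algebra_simps)
    then show ?thesis by blast
  qed
  moreover have "w \<star> x \<in> ?J" if x: "x \<in> ?J" for w x
  proof -
    obtain u v where "x = u \<star> f + v \<star> h" using x by blast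
    then have "w \<star> x = (w \<star> u) \<star> f + (w \<star> v) \<star> h" by (simp add: skew_mult_add_right skew_mult_assoc)
    then show ?thesis by blast
  qed
  ultimately show ?thesis unfolding left_ideal_def by blast
qed

lemma left_ideal_quotient: "left_ideal {x. \<exists>q. x \<star> h = q \<star> f}"
proof -
  let ?J = "{x. \<exists>q. x \<star> h = q \<star> f}"
  have "x - y \<in> ?J" if xy: "x \<in> ?J" "y \<in> ?J" for x y
  proof -
    obtain q q' where "x \<star> h = q \<star> f" "y \<star> h = q' \<star> f" using xy by blast
    then have "(x - y) \<star> h = (q - q') \<star> f" by (simp add: skew_mult_diff_left)
    then show ?thesis by blast
  qed
  moreover have "w \<star> x \<in> ?J" if x: "x \<in> ?J" for w x
  proof -
    obtain q where "x \<star> h = q \<star> f" using x by blast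
    then have "(w \<star> x) \<star> h = (w \<star> q) \<star> f" by (simp add: skew_mult_assoc)
    then show ?thesis by blast
  qed
  ultimately show ?thesis unfolding left_ideal_def by blast
qed

end

section \<open>The algebra S_f\<close>

locale petit_algebra = skew_poly_ring +
  fixes f :: "'a poly"
  assumes monic: "lead_coeff f = 1" and degree_pos: "0 < degree f"
begin

abbreviation rem :: "'a poly \<Rightarrow> 'a poly" where
  "rem p \<equiv> skew_rmod \<sigma> \<delta> p f"

abbreviation S :: "'a poly set" where
  "S \<equiv> Sf_carrier f"

abbreviation Sf_times :: "'a poly \<Rightarrow> 'a poly \<Rightarrow> 'a poly" (infixl "\<odot>" 70) where
  "g \<odot> h \<equiv> Sf_mult \<sigma> \<delta> f g h"

lemma mem_Sf [simp]: "g \<in> S \<longleftrightarrow> degree g < degree f"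
  by (simp add: Sf_carrier_def)

lemma rem_eqI: "degree r < degree f \<Longrightarrow> p = q \<star> f + r \<Longrightarrow> rem p = r"
  by (rule skew_rmod_eqI[OF monic])

lemma rem_degree: "degree (rem p) < degree f"
  and rem_decomp: "\<exists>q. p = q \<star> f + rem p"
proof -
  obtain q r where "p = q \<star> f + r" "degree r < degree f"
    using skew_right_division[OF monic degree_pos] by blast
  with rem_eqI[OF this(2,1)] show "degree (rem p) < degree f" "\<exists>q. p = q \<star> f + rem p" by auto
qed

lemma rem_id: "degree r < degree f \<Longrightarrow> rem r = r"
  using rem_eqI[of r r 0] by simp

lemma rem_0 [simp]: "rem 0 = 0"
  using rem_id degree_pos by simp

lemma rem_add_multiple: "rem (p + q \<star> f) = rem p"
proof -
  obtain a where "p = a \<star> f + rem p" using rem_decomp by blast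
  then have "p + q \<star> f = (a + q) \<star> f + rem p" by (simp add: skew_mult_add_left algebra_simps)
  then show ?thesis using rem_eqI rem_degree by blast
qed

lemma rem_multiple: "rem (q \<star> f) = 0"
  using rem_add_multiple[of 0 q] by simp

lemma rem_eq_0_iff: "rem p = 0 \<longleftrightarrow> (\<exists>q. p = q \<star> f)"
  using rem_decomp rem_multiple by (metis add.right_neutral)

lemma rem_add: "rem (p + q) = rem p + rem q"
proof -
  obtain a b where "p = a \<star> f + rem p" "q = b \<star> f + rem q" using rem_decomp by metis
  then have "p + q = (a + b) \<star> f + (rem p + rem q)" by (simp add: skew_mult_add_left algebra_simps)
  moreover have "degree (rem p + rem q) < degree f"
    using rem_degree degree_add_le_max[of "rem p" "rem q"] by (simp add: le_less_trans)
  ultimately show ?thesis by (rule rem_eqI[rotated])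
qed

lemma rem_diff: "rem (p - q) = rem p - rem q"
  using rem_add[of "p - q" q] by (simp add: algebra_simps)

lemma rem_skew_lscal: "rem (skew_lscal c p) = skew_lscal c (rem p)"
proof -
  obtain a where "p = a \<star> f + rem p" using rem_decomp by blast
  then have "skew_lscal c p = skew_lscal c a \<star> f + skew_lscal c (rem p)"
    by (metis skew_lscal_add skew_mult_skew_lscal_left)
  moreover have "degree (skew_lscal c (rem p)) < degree f"
    using rem_degree degree_skew_lscal_le le_less_trans by blast
  ultimately show ?thesis by (rule rem_eqI[rotated])
qed

lemma rem_sum: "rem (sum g A) = (\<Sum>x\<in>A. rem (g x))"
  by (induction A rule: infinite_finite_induct) (simp_all add: rem_add)

lemma Sf_mult_in_Sf: "g \<odot> h \<in> S"
  by (simp add: Sf_mult_def rem_degree)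

lemma Sf_mult_add_left: "(g1 + g2) \<odot> h = g1 \<odot> h + g2 \<odot> h"
  by (simp add: Sf_mult_def skew_mult_add_left rem_add)

lemma Sf_mult_add_right: "g \<odot> (h1 + h2) = g \<odot> h1 + g \<odot> h2"
  by (simp add: Sf_mult_def skew_mult_add_right rem_add)

lemma Sf_mult_diff_left: "(g1 - g2) \<odot> h = g1 \<odot> h - g2 \<odot> h"
  by (simp add: Sf_mult_def skew_mult_diff_left rem_diff)

lemma Sf_mult_diff_right: "g \<odot> (h1 - h2) = g \<odot> h1 - g \<odot> h2"
  by (simp add: Sf_mult_def skew_mult_diff_right rem_diff)

lemma Sf_mult_skew_lscal_left: "skew_lscal c g \<odot> h = skew_lscal c (g \<odot> h)"
  by (simp add: Sf_mult_def skew_mult_skew_lscal_left rem_skew_lscal)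

lemma Sf_mult_1_right: "g \<in> S \<Longrightarrow> g \<odot> [:1:] = g"
  by (simp add: Sf_mult_def rem_id)

lemma Sf_mult_1_left: "g \<in> S \<Longrightarrow> [:1:] \<odot> g = g"
  by (simp add: Sf_mult_def rem_id)

lemma Sf_add_closed: "g \<in> S \<Longrightarrow> h \<in> S \<Longrightarrow> g + h \<in> S"
  using degree_add_le_max[of g h] by simp

lemma Sf_diff_closed: "g \<in> S \<Longrightarrow> h \<in> S \<Longrightarrow> g - h \<in> S"
  using degree_diff_le_max[of g h] by simp

lemma Sf_monom_closed: "i < degree f \<Longrightarrow> monom c i \<in> S"
  using degree_monom_le[of c i] by simp

sublocale Sf: left_vector_space "UNIV :: 'a set" "(*)" 1 S skew_lscal
  by unfold_locales
    (auto simp: degree_pos skew_lscal_add_left skew_lscal_add skew_lscal_skew_lscal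
      intro: le_less_trans[OF degree_add_le_max] le_less_trans[OF degree_skew_lscal_le]
      dest: left_inverse)

lemma not_skew_unit: "\<not> skew_unit \<sigma> \<delta> f"
proof
  assume "skew_unit \<sigma> \<delta> f"
  then obtain g where g: "g \<star> f = [:1:]" unfolding skew_unit_def by blast
  then have "g \<noteq> 0" by auto
  then have "degree (g \<star> f) \<ge> degree f" using skew_mult_monic[OF monic] by simp
  then show False using g degree_pos by simp
qed

lemma skew_irreducible_if_Sf_division_algebra:
  assumes "Sf_division_algebra \<sigma> \<delta> f"
  shows "skew_irreducible \<sigma> \<delta> f"
  unfolding skew_irreducible_def
proof (intro conjI not_skew_unit notI)
  assume "\<exists>g h. f = g \<star> h \<and> degree g < degree f \<and> degree h < degree f"
  then obtain g h where gh: "f = g \<star> h" "degree g < degree f" "degree h < degree f" by blast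
  then have "g \<noteq> 0" "h \<noteq> 0" using monic by auto
  then have "inj_on (\<lambda>h. g \<odot> h) S"
    using assms gh(2) unfolding Sf_division_algebra_def by (auto intro: bij_betw_imp_inj_on)
  moreover have "g \<odot> h = g \<odot> 0"
    unfolding Sf_mult_def gh(1)[symmetric] using rem_multiple[of "[:1:]"] by simp
  ultimately show False using gh(3) degree_pos \<open>h \<noteq> 0\<close> by (auto dest: inj_onD)
qed

lemma poly_as_sum_skew_lscal_monoms: "degree x < n \<Longrightarrow> x = (\<Sum>j<n. skew_lscal (coeff x j) (monom 1 j))"
  by (cases n) (simp_all add: skew_lscal_monom lessThan_Suc_atMost poly_as_sum_of_monoms')

lemma Sf_span_monoms: "S \<subseteq> Sf.span (\<lambda>i. monom 1 i) {..<degree f}"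
  unfolding Sf.span_def using poly_as_sum_skew_lscal_monoms
    by (auto intro!: exI[of _ "coeff x" for x])

lemma Sf_monoms_independent: "Sf.independent (\<lambda>i. monom 1 i) {..<degree f}"
proof (rule Sf.independentI)
  fix c :: "nat \<Rightarrow> 'a" and j
  assume "(\<Sum>i\<in>{..<degree f}. skew_lscal (c i) (monom 1 i)) = 0" "j \<in> {..<degree f}"
  moreover have "coeff (\<Sum>i\<in>{..<degree f}. skew_lscal (c i) (monom 1 i)) j = c j"
    using \<open>j \<in> {..<degree f}\<close> by (simp add: skew_lscal_monom coeff_sum)
  ultimately show "c j = 0" by simp
qed

lemma degree_le_if_rem_mult_onto:
  assumes onto: "\<And>r. r \<in> S \<Longrightarrow> \<exists>x. degree x < n \<and> rem (x \<star> h) = r"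
  shows "degree f \<le> n"
proof -
  define G where "G i = rem (monom 1 i \<star> h)" for i
  have G_in_Sf: "degree (G i) < degree f" for i unfolding G_def by (rule rem_degree)
  have "monom 1 i \<in> Sf.span G {..<n}" if i: "i < degree f" for i
  proof -
    obtain x where x: "degree x < n" "rem (x \<star> h) = monom 1 i"
      using onto Sf_monom_closed[OF i] by blast
    from poly_as_sum_skew_lscal_monoms[OF x(1)]
    have "rem (x \<star> h) = rem ((\<Sum>j<n. skew_lscal (coeff x j) (monom 1 j)) \<star> h)"
      by (rule arg_cong)
    also have "\<dots> = (\<Sum>j<n. skew_lscal (coeff x j) (G j))"
      by (simp add: G_def skew_mult_sum_left rem_sum skew_mult_skew_lscal_left rem_skew_lscal)
    finally show ?thesis unfolding Sf.span_def x(2) by blast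
  qed
  then have "card {..<degree f} \<le> card {..<n}"
    by (intro Sf.independent_card_le[OF _ _ _ _ Sf_monoms_independent]) (auto simp: G_in_Sf)
  then show ?thesis by simp
qed

definition eigenring :: "'a poly set" where
  "eigenring = {e \<in> S. \<exists>p. f \<star> e = p \<star> f}"

lemma Sf_mult_decomp: "\<exists>q. g \<star> h = q \<star> f + g \<odot> h"
  unfolding Sf_mult_def by (rule rem_decomp)

(* Right multiplication by e maps D[t] f into itself, so it is compatible with reduction mod f. *)
lemma Sf_mult_assoc_eigen:
  assumes "f \<star> e = p \<star> f"
  shows "(v \<odot> b) \<odot> e = v \<odot> (b \<odot> e)"
proof -
  obtain q q' where q: "v \<star> b = q \<star> f + v \<odot> b" and q': "b \<star> e = q' \<star> f + b \<odot> e"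
    using Sf_mult_decomp by metis
  have "(v \<odot> b) \<odot> e = rem ((v \<star> b - q \<star> f) \<star> e)"
    unfolding q by (simp add: Sf_mult_def)
  also have "\<dots> = rem ((v \<star> b) \<star> e - (q \<star> p) \<star> f)"
    by (simp add: skew_mult_diff_left skew_mult_assoc assms)
  also have "\<dots> = rem (v \<star> (b \<star> e))"
    by (simp add: rem_diff rem_multiple skew_mult_assoc[of v b e])
  also have "\<dots> = rem ((v \<star> q') \<star> f + v \<star> (b \<odot> e))"
    by (simp add: q' skew_mult_add_right skew_mult_assoc)
  also have "\<dots> = v \<odot> (b \<odot> e)"
    by (simp add: Sf_mult_def rem_add rem_multiple)
  finally show ?thesis .
qed

lemma zero_in_eigenring: "0 \<in> eigenring"
  unfolding eigenring_def using degree_pos by (auto intro: exI[of _ 0])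

lemma one_in_eigenring: "[:1:] \<in> eigenring"
  unfolding eigenring_def using degree_pos by (auto intro: exI[of _ "[:1:]"])

lemma const_in_eigenring: "f \<star> [:b:] = [:d:] \<star> f \<Longrightarrow> [:b:] \<in> eigenring"
  unfolding eigenring_def using degree_pos by auto

lemma eigenring_add_closed: "a \<in> eigenring \<Longrightarrow> b \<in> eigenring \<Longrightarrow> a + b \<in> eigenring"
  unfolding eigenring_def using Sf_add_closed
    by (auto simp: skew_mult_add_right skew_mult_add_left[symmetric])

lemma eigenring_uminus_closed: "a \<in> eigenring \<Longrightarrow> - a \<in> eigenring"
proof -
  assume "a \<in> eigenring"
  then obtain p where "a \<in> S" "f \<star> a = p \<star> f" unfolding eigenring_def by blast
  then have "- a \<in> S" "f \<star> (- a) = (- p) \<star> f"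
    by (simp_all add: skew_mult_minus_right skew_mult_minus_left)
  then show ?thesis unfolding eigenring_def by blast
qed

lemma eigenring_Sf_mult_closed:
  assumes "a \<in> eigenring" "b \<in> eigenring"
  shows "a \<odot> b \<in> eigenring"
proof -
  obtain pa pb where pa: "f \<star> a = pa \<star> f" and pb: "f \<star> b = pb \<star> f"
    using assms unfolding eigenring_def by blast
  obtain q where "a \<star> b = q \<star> f + a \<odot> b" using Sf_mult_decomp by blast
  then have "f \<star> (a \<odot> b) = f \<star> (a \<star> b - q \<star> f)" by (simp add: algebra_simps)
  also have "\<dots> = (f \<star> a) \<star> b - (f \<star> q) \<star> f"
    by (simp add: skew_mult_diff_right skew_mult_assoc)
  also have "\<dots> = (pa \<star> pb - f \<star> q) \<star> f"
    by (simp add: pa skew_mult_diff_left skew_mult_assoc pb)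
  finally show ?thesis unfolding eigenring_def using Sf_mult_in_Sf by blast
qed

end

section \<open>S_f for irreducible f\<close>

locale irreducible_petit_algebra = petit_algebra +
  assumes irreducible: "skew_irreducible \<sigma> \<delta> f"
begin

lemma skew_bezout:
  assumes "h \<in> S" "h \<noteq> 0"
  shows "\<exists>u v. r = u \<star> f + v \<star> h"
proof -
  define J where "J = {x. \<exists>u v. x = u \<star> f + v \<star> h}"
  have "left_ideal J" unfolding J_def by (rule left_ideal_sum_multiples)
  moreover have "h \<in> J" unfolding J_def by (intro CollectI exI[of _ 0] exI[of _ "[:1:]"]) simp
  moreover have "f \<in> J" unfolding J_def by (intro CollectI exI[of _ "[:1:]"] exI[of _ 0]) simp
  ultimately obtain d where d: "d \<in> J" "lead_coeff d = 1" "\<forall>x\<in>J. \<exists>q. x = q \<star> d"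
    using left_ideal_principal assms(2) by blast
  obtain e e' where e: "f = e \<star> d" and e': "h = e' \<star> d" using d(3) \<open>h \<in> J\<close> \<open>f \<in> J\<close> by blast
  have "e \<noteq> 0" "e' \<noteq> 0" using e e' assms(2) monic by auto
  then have deg: "degree f = degree e + degree d" "degree d \<le> degree h"
    using skew_mult_monic[OF d(2)] e e' by auto
  have "degree d = 0"
  proof (rule ccontr)
    assume "degree d \<noteq> 0"
    then have "degree e < degree f" "degree d < degree f" using deg assms(1) by auto
    then show False using irreducible e unfolding skew_irreducible_def by blast
  qed
  then have "d = [:1:]" using monic_degree_0 d(2) by blast
  then have "r \<star> d \<in> J" using \<open>left_ideal J\<close> d(1) unfolding left_ideal_def by blast
  then show ?thesis using \<open>d = [:1:]\<close> unfolding J_def by simp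
qed

lemma Sf_mult_neq_0:
  assumes g: "g \<in> S" "g \<noteq> 0" and h: "h \<in> S" "h \<noteq> 0"
  shows "g \<odot> h \<noteq> 0"
proof
  assume "g \<odot> h = 0"
  define J where "J = {x. \<exists>q. x \<star> h = q \<star> f}"
  have "g \<in> J" using \<open>g \<odot> h = 0\<close> rem_eq_0_iff unfolding J_def Sf_mult_def by blast
  moreover have "left_ideal J" unfolding J_def by (rule left_ideal_quotient)
  ultimately obtain k where
    k: "k \<in> J" "lead_coeff k = 1" "degree k \<le> degree g" "\<forall>x\<in>J. \<exists>q. x = q \<star> k"
    using left_ideal_principal g(2) by blast
  obtain qk where qk: "k \<star> h = qk \<star> f" using k(1) unfolding J_def by blast
  show False
  proof (cases "degree k = 0")
    case True
    then have "h = qk \<star> f" using monic_degree_0[OF k(2)] qk by simp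
    then have "degree h \<ge> degree f" using skew_mult_monic[OF monic, of qk] h(2) by fastforce
    then show False using h(1) by simp
  next
    case False
    have "\<exists>x. degree x < degree k \<and> rem (x \<star> h) = r" if r: "r \<in> S" for r
    proof -
      obtain u v where uv: "r = u \<star> f + v \<star> h" using skew_bezout[OF h] by blast
      obtain q x where qx: "v = q \<star> k + x" "degree x < degree k"
        using skew_right_division[OF k(2)] False by blast
      have "r = x \<star> h + (u + q \<star> qk) \<star> f"
        using uv qx(1) qk by (simp add: skew_mult_add_left skew_mult_assoc algebra_simps)
      then have "rem r = rem (x \<star> h)" by (simp add: rem_add_multiple)
      then have "rem (x \<star> h) = r" using rem_id r by simp
      with qx(2) show ?thesis by blast
    qed
    then have "degree f \<le> degree k" by (rule degree_le_if_rem_mult_onto)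
    then show False using k(3) g(1) by simp
  qed
qed

lemma Sf_linear_endo_mult_right: "Sf.linear_endo (\<lambda>g. g \<odot> h)"
  unfolding Sf.linear_endo_def
  by (simp add: Sf_mult_in_Sf[simplified] Sf_mult_add_left Sf_mult_skew_lscal_left)

lemma bij_betw_Sf_mult_right:
  assumes "h \<in> S" "h \<noteq> 0"
  shows "bij_betw (\<lambda>g. g \<odot> h) S S"
proof -
  have "inj_on (\<lambda>g. g \<odot> h) S"
  proof (rule inj_onI)
    fix g1 g2 assume "g1 \<in> S" "g2 \<in> S" "g1 \<odot> h = g2 \<odot> h"
    then show "g1 = g2" using Sf_mult_neq_0[OF Sf_diff_closed _ assms]
      by (force simp: Sf_mult_diff_left)
  qed
  moreover have "(\<lambda>g. g \<odot> h) ` S = S"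
    using Sf_span_monoms Sf_monom_closed Sf_linear_endo_mult_right calculation
    by (intro Sf.linear_endo_inj_imp_surj[of "{..<degree f}"]) auto
  ultimately show ?thesis by (simp add: bij_betw_def)
qed

lemma inj_on_Sf_mult_left:
  assumes "g \<in> S" "g \<noteq> 0"
  shows "inj_on (\<lambda>h. g \<odot> h) S"
proof (rule inj_onI)
  fix h1 h2 assume "h1 \<in> S" "h2 \<in> S" "g \<odot> h1 = g \<odot> h2"
  then show "h1 = h2" using Sf_mult_neq_0[OF assms Sf_diff_closed]
    by (force simp: Sf_mult_diff_right)
qed

lemma left_inverse_in_eigenring:
  assumes a: "a \<in> eigenring" "a \<noteq> 0" and b: "b \<in> S" "b \<odot> a = [:1:]"
  shows "b \<in> eigenring"
proof -
  obtain pa where "a \<in> S" and pa: "f \<star> a = pa \<star> f" using a(1) unfolding eigenring_def by blast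
  obtain q where q: "b \<star> a = q \<star> f + [:1:]" using Sf_mult_decomp[of b a] b(2) by auto
  obtain p where p: "f \<star> b = p \<star> f + rem (f \<star> b)" using rem_decomp by blast
  then have "rem (f \<star> b) = f \<star> b - p \<star> f" by (metis add_diff_cancel_left')
  then have "rem (f \<star> b) \<star> a = (f \<star> b - p \<star> f) \<star> a" by simp
  also have "\<dots> = (f \<star> q + [:1:] - p \<star> pa) \<star> f"
    by (simp add: skew_mult_diff_left skew_mult_add_left skew_mult_assoc q pa skew_mult_add_right)
  finally have "rem (f \<star> b) \<odot> a = 0" unfolding Sf_mult_def by (simp add: rem_multiple)
  then have "rem (f \<star> b) = 0" using Sf_mult_neq_0 \<open>a \<in> S\<close> a(2) rem_degree by force
  then show ?thesis using p b(1) unfolding eigenring_def by auto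
qed

lemma eigenring_right_inverse:
  assumes a: "a \<in> eigenring" "a \<noteq> 0"
  shows "\<exists>b\<in>eigenring. a \<odot> b = [:1:]"
proof -
  obtain pa where "a \<in> S" and pa: "f \<star> a = pa \<star> f" using a(1) unfolding eigenring_def by blast
  note bij = bij_betw_Sf_mult_right[OF \<open>a \<in> S\<close> a(2)]
  have "[:1:] \<in> (\<lambda>g. g \<odot> a) ` S" unfolding bij_betw_imp_surj_on[OF bij] using degree_pos by simp
  then obtain b where "b \<in> S" "[:1:] = b \<odot> a" by (rule imageE)
  then have b: "b \<in> S" "b \<odot> a = [:1:]" by simp_all
  have "(a \<odot> b) \<odot> a = [:1:] \<odot> a"
    using Sf_mult_assoc_eigen[OF pa] b(2) Sf_mult_1_right Sf_mult_1_left \<open>a \<in> S\<close> by simp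
  then have "a \<odot> b = [:1:]"
    using inj_onD[OF bij_betw_imp_inj_on[OF bij]] Sf_mult_in_Sf degree_pos by simp
  with left_inverse_in_eigenring[OF a b] show ?thesis by blast
qed

lemma Sf_mult_assoc_eigenring: "a \<in> eigenring \<Longrightarrow> (v \<odot> b) \<odot> a = v \<odot> (b \<odot> a)"
  unfolding eigenring_def using Sf_mult_assoc_eigen by blast

sublocale Ef: left_vector_space eigenring "\<lambda>a b. b \<odot> a" "[:1:]" S "\<lambda>a v. v \<odot> a"
proof unfold_locales
  fix a assume "a \<in> eigenring" "a \<noteq> 0"
  then show "\<exists>b\<in>eigenring. a \<odot> b = [:1:]" by (rule eigenring_right_inverse)
qed (auto simp: zero_in_eigenring one_in_eigenring eigenring_add_closed eigenring_uminus_closed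
    eigenring_Sf_mult_closed degree_pos Sf_mult_in_Sf[simplified] Sf_mult_add_left Sf_mult_add_right
    Sf_mult_assoc_eigenring Sf_mult_1_right intro: le_less_trans[OF degree_add_le_max])

context
  fixes B :: "'a set" and n :: nat and \<beta> :: "nat \<Rightarrow> 'a"
  assumes surj: "surj \<sigma>"
    and spanning: "\<forall>d. \<exists>c. (\<forall>i<n. c i \<in> B) \<and> d = (\<Sum>i<n. \<beta> i * c i)"
    and weak_semi_invariant: "weak_semi_invariant \<sigma> \<delta> B f"
begin

definition eigen_generators :: "nat \<times> nat \<Rightarrow> 'a poly" where
  "eigen_generators = (\<lambda>(i, j). monom ((\<sigma> ^^ i) (\<beta> j)) i)"

abbreviation eigen_index :: "(nat \<times> nat) set" where
  "eigen_index \<equiv> {..<degree f} \<times> {..<n}"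

lemma eigen_generators_in_Sf: "x \<in> eigen_index \<Longrightarrow> eigen_generators x \<in> S"
  using Sf_monom_closed by (auto simp: eigen_generators_def simp del: mem_Sf)

(* With \<sigma>^N(a') = a and a' = \<Sum>\<^sub>j \<beta>_j c_j, the witness is \<Sum>\<^sub>j (\<sigma>^N(\<beta>_j) t^N) \<odot> c_j, whose
   coefficient at t^N is \<Sum>\<^sub>j \<sigma>^N(\<beta>_j) \<sigma>^N(c_j). *)
lemma leading_term_in_eigenspan:
  assumes "N < degree f"
  shows "\<exists>u\<in>Ef.span eigen_generators eigen_index. degree u \<le> N \<and> coeff u N = a"
proof -
  obtain a' where a': "(\<sigma> ^^ N) a' = a" using surj_fn[OF surj, of N] by (metis surjD)
  obtain c where c: "\<forall>j<n. c j \<in> B" "a' = (\<Sum>j<n. \<beta> j * c j)" using spanning by blast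
  define summand where "summand j = skew_lscal ((\<sigma> ^^ N) (\<beta> j)) ((tmul ^^ N) [:c j:])" for j
  have summand_degree: "degree (summand j) \<le> N" for j
    unfolding summand_def using degree_skew_lscal_le tmul_power_const order_trans by blast
  have summand_in_span: "summand j \<in> Ef.span eigen_generators eigen_index" if j: "j < n" for j
  proof -
    have "eigen_generators (N, j) \<odot> [:c j:] = rem (summand j)"
      by (simp add: Sf_mult_def eigen_generators_def skew_mult_monom_left summand_def)
    also have "\<dots> = summand j" using summand_degree[of j] assms by (simp add: rem_id)
    finally have "summand j = eigen_generators (N, j) \<odot> [:c j:]" ..
    moreover have "[:c j:] \<in> eigenring"
      using weak_semi_invariant c(1) j unfolding weak_semi_invariant_def
        by (blast intro: const_in_eigenring)
    ultimately show ?thesis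
      using j assms eigen_generators_in_Sf
      by (auto intro!: Ef.span_scale Ef.span_base)
  qed
  define u where "u = (\<Sum>j<n. summand j)"
  have "u \<in> Ef.span eigen_generators eigen_index"
    unfolding u_def using eigen_generators_in_Sf summand_in_span by (intro Ef.span_sum) auto
  moreover have "degree u \<le> N" unfolding u_def using summand_degree by (intro degree_sum_le) auto
  moreover have "coeff u N = a"
    using tmul_power_const ring_endo_funpow[OF endo, of N]
    by (simp add: u_def summand_def coeff_sum c(2) a'[symmetric] ring_endo_sum ring_endo_mult)
  ultimately show ?thesis by blast
qed

lemma Sf_span_eigenring: "S \<subseteq> Ef.span eigen_generators eigen_index"
proof -
  have vanishing: "v \<in> Ef.span eigen_generators eigen_index"
    if "\<forall>l\<ge>N. coeff v l = 0" "N \<le> degree f" for v N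
    using that
  proof (induction N arbitrary: v)
    case 0
    then have "v = 0" by (simp add: poly_eq_iff)
    then show ?case using Ef.span_zero eigen_generators_in_Sf by blast
  next
    case (Suc N)
    obtain u where
      u: "u \<in> Ef.span eigen_generators eigen_index" "degree u \<le> N" "coeff u N = coeff v N"
      using leading_term_in_eigenspan[of N "coeff v N"] Suc.prems(2) by auto
    have "\<forall>l\<ge>N. coeff (v - u) l = 0"
    proof (intro allI impI)
      fix l assume "N \<le> l"
      show "coeff (v - u) l = 0"
      proof (cases "l = N")
        case False
        then have "Suc N \<le> l" "degree u < l" using \<open>N \<le> l\<close> u(2) by auto
        then show ?thesis using Suc.prems(1) by (simp add: coeff_eq_0)
      qed (simp add: u(3))
    qed
    then have "v - u \<in> Ef.span eigen_generators eigen_index" using Suc.IH Suc.prems(2) by simp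
    then have "(v - u) + u \<in> Ef.span eigen_generators eigen_index"
      using u(1) eigen_generators_in_Sf by (intro Ef.span_add)
    then show ?case by simp
  qed
  show ?thesis
  proof
    fix x assume "x \<in> S"
    then have "\<forall>l\<ge>degree f. coeff x l = 0" by (auto intro: coeff_eq_0)
    then show "x \<in> Ef.span eigen_generators eigen_index" using vanishing by blast
  qed
qed

lemma bij_betw_Sf_mult_left:
  assumes "g \<in> S" "g \<noteq> 0"
  shows "bij_betw (\<lambda>h. g \<odot> h) S S"
proof -
  have "Ef.linear_endo (\<lambda>h. g \<odot> h)"
    unfolding Ef.linear_endo_def
    by (simp add: Sf_mult_in_Sf[simplified] Sf_mult_add_right Sf_mult_assoc_eigenring)
  then have "(\<lambda>h. g \<odot> h) ` S = S"
    using Sf_span_eigenring eigen_generators_in_Sf inj_on_Sf_mult_left[OF assms]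
    by (intro Ef.linear_endo_inj_imp_surj[of eigen_index]) auto
  then show ?thesis using inj_on_Sf_mult_left[OF assms] by (simp add: bij_betw_def)
qed

end

end

context petit_algebra
begin

lemma Sf_division_algebra_iff_skew_irreducible:
  fixes n :: nat and \<beta> :: "nat \<Rightarrow> 'a"
  assumes "surj \<sigma>" "\<forall>d. \<exists>c. (\<forall>i<n. c i \<in> B) \<and> d = (\<Sum>i<n. \<beta> i * c i)"
    and "weak_semi_invariant \<sigma> \<delta> B f"
  shows "Sf_division_algebra \<sigma> \<delta> f \<longleftrightarrow> skew_irreducible \<sigma> \<delta> f"
proof
  assume "skew_irreducible \<sigma> \<delta> f"
  then interpret irreducible_petit_algebra \<sigma> \<delta> f by unfold_locales
  show "Sf_division_algebra \<sigma> \<delta> f"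
    unfolding Sf_division_algebra_def
    using bij_betw_Sf_mult_left[OF assms] bij_betw_Sf_mult_right by blast
qed (rule skew_irreducible_if_Sf_division_algebra)

end

lemma free_right_module_fin_rank_spanning:
  fixes B :: "'a::division_ring set"
  assumes "free_right_module_fin_rank B"
  obtains n :: nat and \<beta> :: "nat \<Rightarrow> 'a" where "\<forall>d. \<exists>c. (\<forall>i<n. c i \<in> B) \<and> d = (\<Sum>i<n. \<beta> i * c i)"
proof -
  obtain n :: nat and b :: "nat \<Rightarrow> 'a"
    where unique: "\<forall>d. \<exists>!c. (\<forall>i<n. c i \<in> B) \<and> (\<forall>i\<ge>n. c i = 0) \<and> d = (\<Sum>i<n. b i * c i)"
    using assms unfolding free_right_module_fin_rank_def by blast
  have "\<exists>c. (\<forall>i<n. c i \<in> B) \<and> d = (\<Sum>i<n. b i * c i)" for d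
    using ex1_implies_ex[OF spec[OF unique, of d]] by blast
  then show thesis using that by blast
qed

lemma free_right_module_fin_rank_UNIV: "free_right_module_fin_rank (UNIV :: 'a::division_ring set)"
  unfolding free_right_module_fin_rank_def
proof (intro exI[of _ "1::nat"] exI[of _ "\<lambda>_. 1::'a"] allI)
  fix d :: 'a
  let ?c = "\<lambda>i::nat. if i = 0 then d else 0"
  have U: "c = ?c" if c: "(\<forall>i<1. c i \<in> UNIV) \<and> (\<forall>i\<ge>1. c i = 0) \<and> d = (\<Sum>i<1. 1 * c i)"
    for c :: "nat \<Rightarrow> 'a"
  proof
    fix i show "c i = ?c i" using c by (cases i) auto
  qed
  show "\<exists>!c :: nat \<Rightarrow> 'a. (\<forall>i<1. c i \<in> UNIV) \<and> (\<forall>i\<ge>1. c i = 0) \<and> d = (\<Sum>i<1. 1 * c i)"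
    using U by (intro ex1I[of _ ?c]) simp_all
qed

lemma Sf_division_algebra_iff_skew_irreducible_weak_semi_invariant:
  assumes "ring_auto \<sigma>" "left_sigma_derivation \<sigma> \<delta>" "free_right_module_fin_rank B"
    and "monic_skew f" "0 < degree f" "weak_semi_invariant \<sigma> \<delta> B f"
  shows "Sf_division_algebra \<sigma> \<delta> f \<longleftrightarrow> skew_irreducible \<sigma> \<delta> f"
proof -
  interpret petit_algebra \<sigma> \<delta> f
    using assms(1,2,4,5) unfolding ring_auto_def monic_skew_def by unfold_locales simp_all
  have "surj \<sigma>" using assms(1) unfolding ring_auto_def by (simp add: bij_is_surj)
  obtain n :: nat and \<beta> where "\<forall>d. \<exists>c. (\<forall>i<n. c i \<in> B) \<and> d = (\<Sum>i<n. \<beta> i * c i)"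
    using free_right_module_fin_rank_spanning[OF assms(3)] .
  from Sf_division_algebra_iff_skew_irreducible[OF \<open>surj \<sigma>\<close> this assms(6)] show ?thesis .
qed

theorem mainTheorem9:
  fixes \<sigma> \<delta> :: "'a::division_ring \<Rightarrow> 'a"
  assumes "ring_auto \<sigma>"
    and "left_sigma_derivation \<sigma> \<delta>"
  shows "(\<forall>(B::'a set) (f::'a poly).
            subring B \<and> free_right_module_fin_rank B \<and> monic_skew f \<and> degree f \<ge> 2 \<and>
            weak_semi_invariant \<sigma> \<delta> B f \<longrightarrow>
            (Sf_division_algebra \<sigma> \<delta> f \<longleftrightarrow> skew_irreducible \<sigma> \<delta> f)) \<and>
         (\<forall>g::'a poly. monic_skew g \<and> degree g \<ge> 2 \<and> right_semi_invariant \<sigma> \<delta> g \<longrightarrow>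
              (Sf_division_algebra \<sigma> \<delta> g \<longleftrightarrow> skew_irreducible \<sigma> \<delta> g))"
proof (intro conjI allI impI)
  fix B f
  assume H: "subring B \<and> free_right_module_fin_rank B \<and> monic_skew f \<and> degree f \<ge> 2 \<and>
    weak_semi_invariant \<sigma> \<delta> B f"
  show "Sf_division_algebra \<sigma> \<delta> f \<longleftrightarrow> skew_irreducible \<sigma> \<delta> f"
    by (rule Sf_division_algebra_iff_skew_irreducible_weak_semi_invariant[OF assms]) (use H in auto)
next
  fix g
  assume H: "monic_skew g \<and> degree g \<ge> 2 \<and> right_semi_invariant \<sigma> \<delta> g"
  show "Sf_division_algebra \<sigma> \<delta> g \<longleftrightarrow> skew_irreducible \<sigma> \<delta> g"
    by (rule Sf_division_algebra_iff_skew_irreducible_weak_semi_invariant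
        [OF assms free_right_module_fin_rank_UNIV])
      (use H in \<open>auto simp: right_semi_invariant_def\<close>)
qed

end
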